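(* Let $\mathbf A\in\mathbb H^{m\times n}$ and $t\in\mathbb R$. Then for all $i=1,\dots,n$ and $j=1,\dots,m$, \[ \operatorname{rdet}_j\big((t\mathbf I+\mathbf A\mathbf A^{*})_{j.}(\mathbf a^{*}_{i.})\big)=r_1^{(ij)}t^{m-1}+r_2^{(ij)}t^{m-2}+\dots+r_m^{(ij)}, \] where $r_m^{(ij)}=\operatorname{rdet}_j\big((\mathbf A\mathbf A^{*})_{j.}(\mathbf a^{*}_{i.})\big)$ and $r_k^{(ij)}=\sum_{\alpha\in I_{k,m}\{j\}}\operatorname{rdet}_j\Big(\big((\mathbf A\mathbf A^{*})_{j.}(\mathbf a^{*}_{i.})\big)^{\alpha}_{\alpha}\Big)$ for $k=1,\dots,m-1$.
   Context: $\mathbb H$ is the quaternion skew field, $\mathbf A^*$ the conjugate transpose, $\mathbf a^*_{i.}$ the $i$th row of $\mathbf A^*$; $\mathbf M_{j.}(\mathbf b)$ is $\mathbf M$ with its $j$th row replaced by the row $\mathbf b$. Row determinant of $\mathbf M=(m_{ab})\in\mathbb H^{m\times m}$: $\operatorname{rdet}_j\mathbf M=\sum_{\sigma\in S_m}(-1)^{m-r}m_{j\,j_{k_1}}m_{j_{k_1}j_{k_1+1}}\cdots m_{j_{k_1+l_1}\,j}\cdots m_{j_{k_r}j_{k_r+1}}\cdots m_{j_{k_r+l_r}j_{k_r}}$, where $\sigma=(j\,j_{k_1}\dots j_{k_1+l_1})(j_{k_2}\dots j_{k_2+l_2})\cdots(j_{k_r}\dots j_{k_r+l_r})$ is the decomposition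 of $\sigma$ into $r$ disjoint cycles (fixed points included), the first cycle starting with $j$, each other cycle starting with its smallest element, and $j_{k_2}<\dots<j_{k_r}$. $L_{k,m}$ is the set of strictly increasing $k$-sequences from $\{1,\dots,m\}$ and $I_{k,m}\{j\}=\{\alpha\in L_{k,m}:j\in\alpha\}$. $\mathbf N^{\alpha}_{\alpha}$ is the principal submatrix with rows and columns indexed by $\alpha$; in $\operatorname{rdet}_j(\mathbf N^\alpha_\alpha)$ the subscript $j$ refers to the row of the submatrix coming from row $j$ of $\mathbf N$. *)

theory Defs
  imports Complex_Main "HOL-Combinatorics.Permutations"
begin

section \<open>Quaternions (the skew field H, only the ring structure is needed here)\<close>

datatype quat = Quat (qre: real) (qi: real) (qj: real) (qk: real)

instantiation quat :: ring_1
begin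
definition "0 = Quat 0 0 0 0"
definition "1 = Quat 1 0 0 0"
definition "x + y = Quat (qre x + qre y) (qi x + qi y) (qj x + qj y) (qk x + qk y)"
definition "x - y = Quat (qre x - qre y) (qi x - qi y) (qj x - qj y) (qk x - qk y)"
definition "- x = Quat (- qre x) (- qi x) (- qj x) (- qk x)"
definition "x * y = Quat
   (qre x * qre y - qi x * qi y - qj x * qj y - qk x * qk y)
   (qre x * qi y + qi x * qre y + qj x * qk y - qk x * qj y)
   (qre x * qj y - qi x * qk y + qj x * qre y + qk x * qi y)
   (qre x * qk y + qi x * qj y - qj x * qi y + qk x * qre y)"
instance
  by standard (auto simp: zero_quat_def one_quat_def plus_quat_def minus_quat_def
      uminus_quat_def times_quat_def algebra_simps intro: quat.expand)
end

definition qcnj :: "quat \<Rightarrow> quat" where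
  "qcnj x = Quat (qre x) (- qi x) (- qj x) (- qk x)"

definition qreal :: "real \<Rightarrow> quat" where
  "qreal t = Quat t 0 0 0"

section \<open>Matrices as functions on 1-based indices\<close>

type_synonym qmat = "nat \<Rightarrow> nat \<Rightarrow> quat"

definition ctrans :: "qmat \<Rightarrow> qmat" where
  "ctrans A = (\<lambda>a b. qcnj (A b a))"

text \<open>product of an m x n and an n x p matrix (only n is needed)\<close>
definition qmult :: "nat \<Rightarrow> qmat \<Rightarrow> qmat \<Rightarrow> qmat" where
  "qmult n A B = (\<lambda>a b. \<Sum>l = 1..n. A a l * B l b)"

definition qid :: qmat where
  "qid = (\<lambda>a b. if a = b then 1 else 0)"

definition qsmult :: "real \<Rightarrow> qmat \<Rightarrow> qmat" where
  "qsmult t M = (\<lambda>a b. qreal t * M a b)"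

definition qadd :: "qmat \<Rightarrow> qmat \<Rightarrow> qmat" where
  "qadd M N = (\<lambda>a b. M a b + N a b)"

definition row :: "qmat \<Rightarrow> nat \<Rightarrow> (nat \<Rightarrow> quat)" where
  "row M i = (\<lambda>b. M i b)"

definition replace_row :: "qmat \<Rightarrow> nat \<Rightarrow> (nat \<Rightarrow> quat) \<Rightarrow> qmat" where
  "replace_row M j b = (\<lambda>a c. if a = j then b c else M a c)"

definition orbit :: "(nat \<Rightarrow> nat) \<Rightarrow> nat \<Rightarrow> nat set" where
  "orbit \<sigma> a = {(\<sigma> ^^ p) a | p. True}"

definition cyc_len :: "(nat \<Rightarrow> nat) \<Rightarrow> nat \<Rightarrow> nat" where
  "cyc_len \<sigma> a = (LEAST p. 0 < p \<and> (\<sigma> ^^ p) a = a)"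

definition cyc_prod :: "qmat \<Rightarrow> (nat \<Rightarrow> nat) \<Rightarrow> nat \<Rightarrow> quat" where
  "cyc_prod M \<sigma> a =
     prod_list (map (\<lambda>p. M ((\<sigma> ^^ p) a) ((\<sigma> ^^ Suc p) a)) [0..<cyc_len \<sigma> a])"

definition other_leaders :: "nat \<Rightarrow> nat \<Rightarrow> (nat \<Rightarrow> nat) \<Rightarrow> nat list" where
  "other_leaders m j \<sigma> = sorted_list_of_set
     {a \<in> {1..m}. a \<notin> orbit \<sigma> j \<and> a = Min (orbit \<sigma> a)}"

text \<open>row determinant rdet_j of an m x m quaternion matrix M (indices 1..m);
  the number of cycles r is 1 + length of other_leaders\<close>
definition rdet :: "nat \<Rightarrow> nat \<Rightarrow> qmat \<Rightarrow> quat" where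
  "rdet m j M = (\<Sum>\<sigma> | \<sigma> permutes {1..m}.
      (- 1) ^ (m - (1 + length (other_leaders m j \<sigma>))) *
      (cyc_prod M \<sigma> j * prod_list (map (cyc_prod M \<sigma>) (other_leaders m j \<sigma>))))"

definition Lseq :: "nat \<Rightarrow> nat \<Rightarrow> nat list set" where
  "Lseq k m = {\<alpha>. length \<alpha> = k \<and> sorted_wrt (<) \<alpha> \<and> set \<alpha> \<subseteq> {1..m}}"

definition Iseq :: "nat \<Rightarrow> nat \<Rightarrow> nat \<Rightarrow> nat list set" where
  "Iseq k m j = {\<alpha> \<in> Lseq k m. j \<in> set \<alpha>}"

text \<open>principal submatrix N^\<alpha>_\<alpha>, indexed 1..length \<alpha>\<close>
definition principal_sub :: "qmat \<Rightarrow> nat list \<Rightarrow> qmat" where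
  "principal_sub N \<alpha> = (\<lambda>a b. N (\<alpha> ! (a - 1)) (\<alpha> ! (b - 1)))"

text \<open>the row index in N^\<alpha>_\<alpha> of the row coming from row j of N\<close>
definition sub_pos :: "nat list \<Rightarrow> nat \<Rightarrow> nat" where
  "sub_pos \<alpha> j = Suc (LEAST p. \<alpha> ! p = j)"

end

theory Submission
  imports Defs
begin

text \<open>Adding a real scalar \<open>t\<close> to the diagonal off row \<open>j\<close> changes a monomial of
  \<open>rdet\<^sub>j\<close> only in the factors \<open>m\<^sub>a\<^sub>a\<close> coming from fixed points \<open>a \<noteq> j\<close> of the permutation:
  every other factor is off the diagonal or lies in row \<open>j\<close>. Since \<open>t\<close> is central in \<open>\<bbbH>\<close>,
  multiplying out \<open>\<Prod>(m\<^sub>a\<^sub>a + t)\<close> gives, for each set \<open>S\<close> of such fixed points, \<open>t\<^bsup>|S|\<^esup>\<close>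
  times the monomial of the same permutation on the index set \<open>T - S\<close>; its sign is unchanged
  because both the size and the number of cycles drop by \<open>|S|\<close>. Regrouping by \<open>U = T - S\<close>
  yields \<open>\<Sum>\<^sub>U t\<^bsup>m-|U|\<^esup> rdet\<^sub>j\<close> over index sets \<open>j \<in> U\<close>, and relabelling \<open>U\<close> monotonically
  by \<open>{1..|U|}\<close> identifies each summand with the row determinant of a principal submatrix.\<close>

lemma qreal_mult_commute: "qreal t * x = x * qreal t"
  by (cases x) (simp add: qreal_def times_quat_def)

lemma qreal_power: "qreal (t ^ p) = qreal t ^ p"
proof (induction p)
  case 0
  show ?case by (simp add: qreal_def one_quat_def)
next
  case (Suc p)
  have "qreal (t * t ^ p) = qreal t * qreal (t ^ p)"
    by (simp add: qreal_def times_quat_def)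
  then show ?case using Suc by simp
qed

lemma power_commute_central:
  fixes c :: "'a::monoid_mult"
  assumes "\<And>x. c * x = x * c"
  shows "c ^ p * x = x * c ^ p"
  by (induction p) (simp_all add: mult.assoc, metis assms mult.assoc)

lemma mult_left_commute_central:
  fixes c :: "'a::semigroup_mult"
  assumes "\<And>x. c * x = x * c"
  shows "a * (c * b) = c * (a * b)"
  by (metis assms mult.assoc)

lemma prod_list_map_add_central:
  fixes \<tau> :: "'a::semiring_1"
  assumes "distinct xs" and central: "\<And>x. \<tau> * x = x * \<tau>"
  shows "prod_list (map (\<lambda>a. f a + (if a \<in> F then \<tau> else 0)) xs)
       = (\<Sum>S\<in>Pow (F \<inter> set xs). \<tau> ^ card S * prod_list (map f (filter (\<lambda>a. a \<notin> S) xs)))"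
  using assms(1)
proof (induction xs)
  case Nil
  then show ?case by simp
next
  case (Cons x xs)
  let ?B = "F \<inter> set xs"
  let ?P = "\<lambda>S. \<tau> ^ card S * prod_list (map f (filter (\<lambda>a. a \<notin> S) xs))"
  let ?Q = "\<lambda>S. \<tau> ^ card S * prod_list (map f (filter (\<lambda>a. a \<notin> S) (x # xs)))"
  have x: "x \<notin> set xs" using Cons.prems by simp
  have IH: "prod_list (map (\<lambda>a. f a + (if a \<in> F then \<tau> else 0)) xs) = (\<Sum>S\<in>Pow ?B. ?P S)"
    using Cons by simp
  have keep_x: "f x * (\<Sum>S\<in>Pow ?B. ?P S) = (\<Sum>S\<in>Pow ?B. ?Q S)"
    unfolding sum_distrib_left
  proof (rule sum.cong)
    fix S assume "S \<in> Pow ?B"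
    then have "x \<notin> S" using x by auto
    then show "f x * ?P S = ?Q S"
      using power_commute_central[OF central, of "card S" "f x"] by (simp add: mult.assoc[symmetric])
  qed simp
  show ?case
  proof (cases "x \<in> F")
    case False
    then have "F \<inter> set (x # xs) = ?B" by auto
    then show ?thesis using False IH keep_x by simp
  next
    case True
    have inj: "inj_on (insert x) (Pow ?B)" using x by (auto simp: inj_on_def)
    have drop_x: "\<tau> * (\<Sum>S\<in>Pow ?B. ?P S) = (\<Sum>S\<in>insert x ` Pow ?B. ?Q S)"
      unfolding sum.reindex[OF inj] sum_distrib_left
    proof (rule sum.cong)
      fix S assume "S \<in> Pow ?B"
      then have "x \<notin> S" "finite S" "filter (\<lambda>a. a \<notin> insert x S) xs = filter (\<lambda>a. a \<notin> S) xs"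
        using x finite_subset by (auto intro!: filter_cong)
      then show "\<tau> * ?P S = (?Q \<circ> insert x) S" by (simp add: mult.assoc)
    qed simp
    have "Pow (F \<inter> set (x # xs)) = Pow ?B \<union> insert x ` Pow ?B"
      using True by (auto simp: Pow_insert)
    moreover have "Pow ?B \<inter> insert x ` Pow ?B = {}" using x by auto
    ultimately have "(\<Sum>S\<in>Pow (F \<inter> set (x # xs)). ?Q S)
        = (\<Sum>S\<in>Pow ?B. ?Q S) + (\<Sum>S\<in>insert x ` Pow ?B. ?Q S)"
      by (simp add: sum.union_disjoint)
    then show ?thesis using True IH keep_x drop_x by (simp add: distrib_right)
  qed
qed

lemma sorted_list_of_set_eqI:
  "sorted_wrt (<) xs \<Longrightarrow> set xs = X \<Longrightarrow> sorted_list_of_set X = xs"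
  by (metis finite_set set_sorted_list_of_set strict_sorted_equal strict_sorted_list_of_set)

lemma sorted_list_of_set_Diff:
  "finite A \<Longrightarrow> sorted_list_of_set (A - S) = filter (\<lambda>x. x \<notin> S) (sorted_list_of_set A)"
  by (rule sorted_list_of_set_eqI) (auto intro: sorted_wrt_filter)

lemma sorted_list_of_set_strict_mono_image:
  fixes h :: "'a::linorder \<Rightarrow> 'b::linorder"
  assumes "strict_mono_on A h" "finite X" "X \<subseteq> A"
  shows "sorted_list_of_set (h ` X) = map h (sorted_list_of_set X)"
proof (rule sorted_list_of_set_eqI)
  show "sorted_wrt (<) (map h (sorted_list_of_set X))"
    unfolding sorted_wrt_map
    by (rule sorted_wrt_mono_rel[of _ "(<)"])
       (use assms in \<open>auto intro: strict_mono_onD\<close>)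
qed (use assms in simp)

lemma strict_mono_on_Min_image:
  fixes h :: "'a::linorder \<Rightarrow> 'b::linorder"
  assumes "strict_mono_on A h" "finite X" "X \<noteq> {}" "X \<subseteq> A"
  shows "Min (h ` X) = h (Min X)"
proof (rule Min_eqI)
  fix y assume "y \<in> h ` X"
  then obtain x where "x \<in> X" "y = h x" by auto
  moreover have "Min X \<in> A" using assms Min_in by blast
  ultimately show "h (Min X) \<le> y"
    using assms by (auto intro: strict_mono_on_leD[OF assms(1)])
qed (use assms in auto)

lemma funpow_fixed_point: "\<sigma> a = a \<Longrightarrow> (\<sigma> ^^ p) a = a"
  by (induction p) auto

lemma inj_funpow_fixed_point: "inj \<sigma> \<Longrightarrow> \<sigma> ((\<sigma> ^^ p) a) = (\<sigma> ^^ p) a \<Longrightarrow> \<sigma> a = a"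
  by (metis funpow_swap1 inj_def inj_fn)

lemma self_in_orbit: "a \<in> orbit \<sigma> a"
  unfolding orbit_def by (auto intro: exI[of _ 0])

lemma orbit_fixed_point: "\<sigma> a = a \<Longrightarrow> orbit \<sigma> a = {a}"
  unfolding orbit_def by (auto simp: funpow_fixed_point intro: exI[of _ 0])

lemma fixed_point_notin_orbit:
  assumes "inj \<sigma>" "\<sigma> a = a" "a \<noteq> j"
  shows "a \<notin> orbit \<sigma> j"
proof
  assume "a \<in> orbit \<sigma> j"
  then obtain p where p: "a = (\<sigma> ^^ p) j" unfolding orbit_def by auto
  then have "\<sigma> j = j" using inj_funpow_fixed_point[OF assms(1), of p j] assms(2) by simp
  then show False using p assms(3) by (simp add: funpow_fixed_point)
qed

lemma cyc_prod_fixed_point: "\<sigma> a = a \<Longrightarrow> cyc_prod N \<sigma> a = N a a"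
proof -
  assume fixed: "\<sigma> a = a"
  then have "cyc_len \<sigma> a = 1" unfolding cyc_len_def by (intro Least_equality) simp_all
  then show ?thesis by (simp add: cyc_prod_def fixed)
qed

definition cycle_leaders :: "nat set \<Rightarrow> nat \<Rightarrow> (nat \<Rightarrow> nat) \<Rightarrow> nat list" where
  "cycle_leaders T j \<sigma> = sorted_list_of_set {a \<in> T. a \<notin> orbit \<sigma> j \<and> a = Min (orbit \<sigma> a)}"

definition rdet_term :: "qmat \<Rightarrow> nat set \<Rightarrow> nat \<Rightarrow> (nat \<Rightarrow> nat) \<Rightarrow> quat" where
  "rdet_term M T j \<sigma> = (- 1) ^ (card T - (1 + length (cycle_leaders T j \<sigma>))) *
      (cyc_prod M \<sigma> j * prod_list (map (cyc_prod M \<sigma>) (cycle_leaders T j \<sigma>)))"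

text \<open>The row determinant over an arbitrary finite index set, so that principal submatrices
  need not be renumbered.\<close>

definition rdet_on :: "nat set \<Rightarrow> nat \<Rightarrow> qmat \<Rightarrow> quat" where
  "rdet_on T j M = (\<Sum>\<sigma> | \<sigma> permutes T. rdet_term M T j \<sigma>)"

lemma rdet_eq_rdet_on: "rdet m j M = rdet_on {1..m} j M"
  by (simp add: rdet_def rdet_on_def rdet_term_def other_leaders_def cycle_leaders_def)

lemma set_cycle_leaders:
  "finite T \<Longrightarrow> set (cycle_leaders T j \<sigma>) = {a \<in> T. a \<notin> orbit \<sigma> j \<and> a = Min (orbit \<sigma> a)}"
  by (simp add: cycle_leaders_def)

lemma distinct_cycle_leaders: "distinct (cycle_leaders T j \<sigma>)"
  by (simp add: cycle_leaders_def)

lemma fixed_point_in_cycle_leaders: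
  "finite T \<Longrightarrow> inj \<sigma> \<Longrightarrow> a \<in> T \<Longrightarrow> a \<noteq> j \<Longrightarrow> \<sigma> a = a \<Longrightarrow> a \<in> set (cycle_leaders T j \<sigma>)"
  by (simp add: set_cycle_leaders orbit_fixed_point fixed_point_notin_orbit)

lemma length_cycle_leaders_less:
  assumes "finite T" "j \<in> T"
  shows "length (cycle_leaders T j \<sigma>) < card T"
proof -
  have "set (cycle_leaders T j \<sigma>) \<subseteq> T - {j}"
    using assms self_in_orbit[of j \<sigma>] by (auto simp: set_cycle_leaders)
  then have "card (set (cycle_leaders T j \<sigma>)) < card T"
    using assms by (meson card_mono card_Diff1_less finite_Diff le_less_trans)
  then show ?thesis by (simp add: distinct_card[OF distinct_cycle_leaders])
qed

lemma cycle_leaders_Diff: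
  "finite T \<Longrightarrow> cycle_leaders (T - S) j \<sigma> = filter (\<lambda>a. a \<notin> S) (cycle_leaders T j \<sigma>)"
  unfolding cycle_leaders_def
  by (subst sorted_list_of_set_Diff[symmetric]) (auto intro: arg_cong[where f=sorted_list_of_set])

text \<open>Deleting fixed points other than \<open>j\<close> from the index set removes as many one-element
  cycles as it removes indices, so the sign of the term is unchanged.\<close>

lemma rdet_term_Diff_fixed_points:
  assumes fin: "finite T" and j: "j \<in> T" and perm: "\<sigma> permutes T - S"
    and S: "S \<subseteq> T - {j}"
  shows "rdet_term M (T - S) j \<sigma> = (- 1) ^ (card T - (1 + length (cycle_leaders T j \<sigma>))) *
      (cyc_prod M \<sigma> j * prod_list (map (cyc_prod M \<sigma>) (filter (\<lambda>a. a \<notin> S) (cycle_leaders T j \<sigma>))))"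
proof -
  let ?ls = "cycle_leaders T j \<sigma>"
  have "inj \<sigma>" using perm by (rule permutes_inj)
  then have "S \<subseteq> set ?ls"
    using S permutes_not_in[OF perm] by (auto intro: fixed_point_in_cycle_leaders[OF fin])
  then have "length (filter (\<lambda>a. a \<in> S) ?ls) = card S"
    by (metis distinct_card distinct_cycle_leaders distinct_filter inter_set_filter
        inf.absorb_iff2 Int_commute)
  then have "length (filter (\<lambda>a. a \<notin> S) ?ls) + card S = length ?ls"
    using sum_length_filter_compl[of "\<lambda>a. a \<in> S" ?ls] by simp
  moreover have "card (T - S) = card T - card S"
    using S fin by (intro card_Diff_subset) (auto intro: finite_subset)
  ultimately have "card (T - S) - (1 + length (cycle_leaders (T - S) j \<sigma>))
      = card T - (1 + length ?ls)"
    using cycle_leaders_Diff[OF fin] length_cycle_leaders_less[OF fin j, of \<sigma>] by simp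
  then show ?thesis by (simp add: rdet_term_def cycle_leaders_Diff[OF fin])
qed

text \<open>The matrix \<open>(\<tau> I + M)\<close> with row \<open>j\<close> taken from \<open>M\<close>: replacing row \<open>j\<close> of \<open>t I + A A\<^sup>*\<close>
  discards the shift in that row.\<close>

definition add_diag_except :: "nat \<Rightarrow> quat \<Rightarrow> qmat \<Rightarrow> qmat" where
  "add_diag_except j \<tau> M = (\<lambda>a c. M a c + (if a = c \<and> a \<noteq> j then \<tau> else 0))"

lemma cyc_prod_add_diag_except_moved:
  assumes "inj \<sigma>" "\<sigma> a \<noteq> a"
  shows "cyc_prod (add_diag_except j \<tau> M) \<sigma> a = cyc_prod M \<sigma> a"
proof -
  have "(\<sigma> ^^ p) a \<noteq> (\<sigma> ^^ Suc p) a" for p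
    using inj_funpow_fixed_point[OF assms(1), of p a] assms(2) by auto
  then show ?thesis by (simp add: cyc_prod_def add_diag_except_def)
qed

lemma cyc_prod_add_diag_except_fixed:
  "\<sigma> a = a \<Longrightarrow> a \<noteq> j \<Longrightarrow> cyc_prod (add_diag_except j \<tau> M) \<sigma> a = cyc_prod M \<sigma> a + \<tau>"
  by (simp add: cyc_prod_fixed_point add_diag_except_def)

lemma cyc_prod_add_diag_except_row:
  "inj \<sigma> \<Longrightarrow> cyc_prod (add_diag_except j \<tau> M) \<sigma> j = cyc_prod M \<sigma> j"
proof (cases "\<sigma> j = j")
  case True
  then show ?thesis by (simp add: cyc_prod_fixed_point add_diag_except_def)
qed (simp add: cyc_prod_add_diag_except_moved)

lemma rdet_term_add_diag_except:
  assumes fin: "finite T" and j: "j \<in> T" and perm: "\<sigma> permutes T"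
    and central: "\<And>x. \<tau> * x = x * \<tau>"
  shows "rdet_term (add_diag_except j \<tau> M) T j \<sigma>
       = (\<Sum>S\<in>Pow {a \<in> T - {j}. \<sigma> a = a}. \<tau> ^ card S * rdet_term M (T - S) j \<sigma>)"
proof -
  let ?ls = "cycle_leaders T j \<sigma>"
  let ?sg = "(- 1 :: quat) ^ (card T - (1 + length ?ls))"
  have inj: "inj \<sigma>" using perm by (rule permutes_inj)
  have not_j: "a \<noteq> j" if "a \<in> set ?ls" for a
    using that self_in_orbit[of j \<sigma>] by (auto simp: set_cycle_leaders[OF fin])
  have shifted: "map (cyc_prod (add_diag_except j \<tau> M) \<sigma>) ?ls
      = map (\<lambda>a. cyc_prod M \<sigma> a + (if a \<in> {a. \<sigma> a = a} then \<tau> else 0)) ?ls"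
    using not_j cyc_prod_add_diag_except_fixed cyc_prod_add_diag_except_moved[OF inj] by auto
  have fixed: "{a. \<sigma> a = a} \<inter> set ?ls = {a \<in> T - {j}. \<sigma> a = a}"
    using fixed_point_in_cycle_leaders[OF fin inj] not_j by (auto simp: set_cycle_leaders[OF fin])
  have "rdet_term (add_diag_except j \<tau> M) T j \<sigma> = (\<Sum>S\<in>Pow {a \<in> T - {j}. \<sigma> a = a}.
      ?sg * (cyc_prod M \<sigma> j * (\<tau> ^ card S * prod_list (map (cyc_prod M \<sigma>) (filter (\<lambda>a. a \<notin> S) ?ls)))))"
    unfolding rdet_term_def cyc_prod_add_diag_except_row[OF inj] shifted
      prod_list_map_add_central[OF distinct_cycle_leaders central] fixed
    by (simp add: sum_distrib_left)
  also have "\<dots> = (\<Sum>S\<in>Pow {a \<in> T - {j}. \<sigma> a = a}. \<tau> ^ card S * rdet_term M (T - S) j \<sigma>)"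
  proof (rule sum.cong[OF refl])
    fix S assume S: "S \<in> Pow {a \<in> T - {j}. \<sigma> a = a}"
    then have perm': "\<sigma> permutes T - S" and S': "S \<subseteq> T - {j}"
      using perm by (auto simp: permutes_def)
    have "\<tau> ^ card S * rdet_term M (T - S) j \<sigma>
        = ?sg * (cyc_prod M \<sigma> j * (\<tau> ^ card S * prod_list (map (cyc_prod M \<sigma>) (filter (\<lambda>a. a \<notin> S) ?ls))))"
      unfolding rdet_term_Diff_fixed_points[OF fin j perm' S']
      by (simp only: mult_left_commute_central[OF power_commute_central[OF central]])
    then show "?sg * (cyc_prod M \<sigma> j * (\<tau> ^ card S * prod_list (map (cyc_prod M \<sigma>) (filter (\<lambda>a. a \<notin> S) ?ls))))
        = \<tau> ^ card S * rdet_term M (T - S) j \<sigma>" ..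
  qed
  finally show ?thesis .
qed

lemma rdet_on_add_diag_except:
  assumes fin: "finite T" and j: "j \<in> T" and central: "\<And>x. \<tau> * x = x * \<tau>"
  shows "rdet_on T j (add_diag_except j \<tau> M)
       = (\<Sum>U | j \<in> U \<and> U \<subseteq> T. \<tau> ^ (card T - card U) * rdet_on U j M)"
proof -
  let ?P = "{\<sigma>. \<sigma> permutes T}"
  let ?G = "\<lambda>\<sigma> S. \<tau> ^ card S * rdet_term M (T - S) j \<sigma>"
  have perms_fixing: "{\<sigma> \<in> ?P. S \<subseteq> {a \<in> T - {j}. \<sigma> a = a}} = {\<sigma>. \<sigma> permutes T - S}"
    if "S \<subseteq> T - {j}" for S
    using that by (auto simp: permutes_def)
  have "rdet_on T j (add_diag_except j \<tau> M) = (\<Sum>\<sigma>\<in>?P. \<Sum>S\<in>Pow {a \<in> T - {j}. \<sigma> a = a}. ?G \<sigma> S)"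
    unfolding rdet_on_def by (rule sum.cong) (simp_all add: rdet_term_add_diag_except[OF fin j _ central])
  also have "\<dots> = (\<Sum>\<sigma>\<in>?P. \<Sum>S | S \<in> Pow (T - {j}) \<and> S \<subseteq> {a \<in> T - {j}. \<sigma> a = a}. ?G \<sigma> S)"
    by (intro sum.cong) auto
  also have "\<dots> = (\<Sum>S\<in>Pow (T - {j}). \<Sum>\<sigma> | \<sigma> \<in> ?P \<and> S \<subseteq> {a \<in> T - {j}. \<sigma> a = a}. ?G \<sigma> S)"
    by (rule sum.swap_restrict) (simp_all add: fin finite_permutations)
  also have "\<dots> = (\<Sum>S\<in>Pow (T - {j}). \<tau> ^ card S * rdet_on (T - S) j M)"
  proof (rule sum.cong[OF refl])
    fix S assume "S \<in> Pow (T - {j})"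
    then show "(\<Sum>\<sigma> | \<sigma> \<in> ?P \<and> S \<subseteq> {a \<in> T - {j}. \<sigma> a = a}. ?G \<sigma> S)
        = \<tau> ^ card S * rdet_on (T - S) j M"
      by (simp only: Pow_iff perms_fixing) (simp add: rdet_on_def sum_distrib_left)
  qed
  also have "\<dots> = (\<Sum>U | j \<in> U \<and> U \<subseteq> T. \<tau> ^ (card T - card U) * rdet_on U j M)"
  proof (rule sum.reindex_bij_witness[where i="\<lambda>U. T - U" and j="\<lambda>S. T - S"])
    fix S assume "S \<in> Pow (T - {j})"
    then have "S \<subseteq> T" by auto
    then have "card T - card (T - S) = card S"
      using fin by (simp add: card_Diff_subset finite_subset card_mono)
    then show "\<tau> ^ (card T - card (T - S)) * rdet_on (T - S) j M = \<tau> ^ card S * rdet_on (T - S) j M"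
      by simp
  qed (use j in auto)
  finally show ?thesis .
qed

definition relabel_perm :: "nat set \<Rightarrow> (nat \<Rightarrow> nat) \<Rightarrow> (nat \<Rightarrow> nat) \<Rightarrow> nat \<Rightarrow> nat" where
  "relabel_perm A h \<sigma> = (\<lambda>x. if x \<in> h ` A then h (\<sigma> (inv_into A h x)) else x)"

lemma funpow_relabel_perm:
  assumes "inj_on h A" "\<sigma> permutes A" "x \<in> A"
  shows "(relabel_perm A h \<sigma> ^^ q) (h x) = h ((\<sigma> ^^ q) x)"
proof (induction q)
  case (Suc q)
  have "(\<sigma> ^^ q) x \<in> A" using permutes_in_funpow_image assms(2,3) .
  then show ?case using Suc assms(1) by (simp add: relabel_perm_def)
qed simp

lemma orbit_relabel_perm:
  "inj_on h A \<Longrightarrow> \<sigma> permutes A \<Longrightarrow> x \<in> A \<Longrightarrow> orbit (relabel_perm A h \<sigma>) (h x) = h ` orbit \<sigma> x"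
  unfolding orbit_def by (auto simp: funpow_relabel_perm)

lemma orbit_subset_permutes: "\<sigma> permutes A \<Longrightarrow> x \<in> A \<Longrightarrow> orbit \<sigma> x \<subseteq> A"
  unfolding orbit_def by (auto intro: permutes_in_funpow_image)

lemma cyc_prod_relabel_perm:
  assumes inj: "inj_on h A" and perm: "\<sigma> permutes A" and x: "x \<in> A"
  shows "cyc_prod N (relabel_perm A h \<sigma>) (h x) = cyc_prod (\<lambda>a b. N (h a) (h b)) \<sigma> x"
proof -
  have "(relabel_perm A h \<sigma> ^^ q) (h x) = h x \<longleftrightarrow> (\<sigma> ^^ q) x = x" for q
    using funpow_relabel_perm[OF assms] permutes_in_funpow_image[OF perm x] x inj
    by (auto dest: inj_onD)
  then have "cyc_len (relabel_perm A h \<sigma>) (h x) = cyc_len \<sigma> x"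
    by (simp add: cyc_len_def)
  then show ?thesis
    by (simp add: cyc_prod_def funpow_relabel_perm[OF assms] del: funpow.simps)
qed

lemma cycle_leaders_relabel_perm:
  assumes fin: "finite A" and sm: "strict_mono_on A h" and perm: "\<sigma> permutes A" and j: "j \<in> A"
  shows "cycle_leaders (h ` A) (h j) (relabel_perm A h \<sigma>) = map h (cycle_leaders A j \<sigma>)"
proof -
  let ?\<rho> = "relabel_perm A h \<sigma>"
  have inj: "inj_on h A" using sm by (rule strict_mono_on_imp_inj_on)
  have leader_iff: "(h b \<notin> orbit ?\<rho> (h j) \<and> h b = Min (orbit ?\<rho> (h b)))
      \<longleftrightarrow> (b \<notin> orbit \<sigma> j \<and> b = Min (orbit \<sigma> b))" if b: "b \<in> A" for b
  proof -
    have orb: "finite (orbit \<sigma> b)" "orbit \<sigma> b \<noteq> {}" "orbit \<sigma> b \<subseteq> A"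
      using orbit_subset_permutes[OF perm b] fin self_in_orbit[of b \<sigma>] finite_subset by auto
    then have "Min (orbit ?\<rho> (h b)) = h (Min (orbit \<sigma> b))" "Min (orbit \<sigma> b) \<in> A"
      using strict_mono_on_Min_image[OF sm orb] orbit_relabel_perm[OF inj perm b] Min_in by auto
    moreover have "h b \<in> h ` orbit \<sigma> j \<longleftrightarrow> b \<in> orbit \<sigma> j"
      using orbit_subset_permutes[OF perm j] b inj by (auto dest: inj_onD)
    ultimately show ?thesis
      unfolding orbit_relabel_perm[OF inj perm j] using b inj by (auto dest: inj_onD)
  qed
  have "{a \<in> h ` A. a \<notin> orbit ?\<rho> (h j) \<and> a = Min (orbit ?\<rho> a)}
      = h ` {b \<in> A. b \<notin> orbit \<sigma> j \<and> b = Min (orbit \<sigma> b)}"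
    using leader_iff by auto
  then show ?thesis
    unfolding cycle_leaders_def
    by (simp add: sorted_list_of_set_strict_mono_image[OF sm finite_subset[OF _ fin]])
qed

lemma rdet_on_strict_mono_relabel:
  assumes fin: "finite A" and sm: "strict_mono_on A h" and j: "j \<in> A"
  shows "rdet_on (h ` A) (h j) N = rdet_on A j (\<lambda>a b. N (h a) (h b))"
proof -
  have inj: "inj_on h A" using sm by (rule strict_mono_on_imp_inj_on)
  have relabelled_term: "rdet_term N (h ` A) (h j) (relabel_perm A h \<sigma>) = rdet_term (\<lambda>a b. N (h a) (h b)) A j \<sigma>"
    if perm: "\<sigma> permutes A" for \<sigma>
  proof -
    have "set (cycle_leaders A j \<sigma>) \<subseteq> A" using fin by (auto simp: set_cycle_leaders)
    then have leaders: "map (cyc_prod N (relabel_perm A h \<sigma>)) (map h (cycle_leaders A j \<sigma>))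
        = map (cyc_prod (\<lambda>a b. N (h a) (h b)) \<sigma>) (cycle_leaders A j \<sigma>)"
      by (auto simp: cyc_prod_relabel_perm[OF inj perm])
    show ?thesis
      unfolding rdet_term_def cycle_leaders_relabel_perm[OF fin sm perm j] leaders
      by (simp add: card_image[OF inj] cyc_prod_relabel_perm[OF inj perm j])
  qed
  have "bij_betw (relabel_perm A h) {\<sigma>. \<sigma> permutes A} {\<sigma>. \<sigma> permutes h ` A}"
    unfolding relabel_perm_def using inj by (intro bij_betw_permutations) (simp add: bij_betw_def)
  then have "(\<Sum>\<sigma> | \<sigma> permutes A. rdet_term N (h ` A) (h j) (relabel_perm A h \<sigma>)) = rdet_on (h ` A) (h j) N"
    unfolding rdet_on_def by (rule sum.reindex_bij_betw)
  then show ?thesis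
    unfolding rdet_on_def by (simp add: relabelled_term)
qed

lemma rdet_principal_sub:
  assumes sorted: "sorted_wrt (<) \<alpha>" and j: "j \<in> set \<alpha>"
  shows "rdet (length \<alpha>) (sub_pos \<alpha> j) (principal_sub N \<alpha>) = rdet_on (set \<alpha>) j N"
proof -
  define h where "h p = \<alpha> ! (p - 1)" for p
  let ?A = "{1..length \<alpha>}"
  have image: "h ` ?A = set \<alpha>"
  proof
    show "set \<alpha> \<subseteq> h ` ?A"
    proof
      fix x assume "x \<in> set \<alpha>"
      then obtain p where "p < length \<alpha>" "\<alpha> ! p = x" by (auto simp: in_set_conv_nth)
      then show "x \<in> h ` ?A" by (auto simp: h_def intro!: image_eqI[of _ _ "Suc p"])
    qed
  qed (auto simp: h_def)
  have mono: "strict_mono_on ?A h"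
  proof (rule strict_mono_onI)
    fix r s assume "r \<in> ?A" "s \<in> ?A" "r < s"
    then show "h r < h s" using sorted_wrt_nth_less[OF sorted, of "r - 1" "s - 1"] by (auto simp: h_def)
  qed
  obtain p where p: "p < length \<alpha>" "\<alpha> ! p = j" using j by (auto simp: in_set_conv_nth)
  then have "\<alpha> ! (LEAST p. \<alpha> ! p = j) = j" "(LEAST p. \<alpha> ! p = j) \<le> p"
    by (auto intro: LeastI Least_le)
  then have pos: "sub_pos \<alpha> j \<in> ?A" "h (sub_pos \<alpha> j) = j"
    using p by (auto simp: sub_pos_def h_def)
  have "principal_sub N \<alpha> = (\<lambda>a b. N (h a) (h b))" by (simp add: principal_sub_def h_def)
  then show ?thesis
    unfolding rdet_eq_rdet_on using rdet_on_strict_mono_relabel[OF _ mono pos(1), of N] image pos(2)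
    by simp
qed

lemma sum_Iseq_eq_sum_subsets:
  "(\<Sum>\<alpha>\<in>Iseq k m j. g (set \<alpha>)) = (\<Sum>U | j \<in> U \<and> U \<subseteq> {1..m} \<and> card U = k. g U)"
proof (rule sum.reindex_bij_witness[where i=sorted_list_of_set and j=set])
  fix \<alpha> assume "\<alpha> \<in> Iseq k m j"
  then have \<alpha>: "sorted_wrt (<) \<alpha>" "length \<alpha> = k" "set \<alpha> \<subseteq> {1..m}" "j \<in> set \<alpha>"
    by (auto simp: Iseq_def Lseq_def)
  then show "sorted_list_of_set (set \<alpha>) = \<alpha>" by (simp add: sorted_list_of_set_eqI)
  show "set \<alpha> \<in> {U. j \<in> U \<and> U \<subseteq> {1..m} \<and> card U = k}"
    using \<alpha> by (simp add: strict_sorted_iff distinct_card)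
next
  fix U assume "U \<in> {U. j \<in> U \<and> U \<subseteq> {1..m} \<and> card U = k}"
  moreover then have "finite U" by (auto intro: finite_subset)
  ultimately show "set (sorted_list_of_set U) = U" and "sorted_list_of_set U \<in> Iseq k m j"
    by (auto simp: Iseq_def Lseq_def)
qed simp

lemma sum_subsets_containing:
  assumes fin: "finite T" and j: "j \<in> T"
  shows "(\<Sum>U | j \<in> U \<and> U \<subseteq> T. g U)
       = (\<Sum>k = 1..card T - 1. \<Sum>U | j \<in> U \<and> U \<subseteq> T \<and> card U = k. g U) + g T"
proof -
  let ?V = "{U. j \<in> U \<and> U \<subseteq> T}"
  have pos: "0 < card T" using j fin card_gt_0_iff by blast
  have "card U \<in> {1..card T}" if "U \<in> ?V" for U
    using that fin card_mono[OF fin] card_gt_0_iff[of U] finite_subset[of U T] by auto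
  then have "(\<Sum>U\<in>?V. g U) = (\<Sum>k = 1..card T. \<Sum>U | U \<in> ?V \<and> card U = k. g U)"
    by (intro sum.group[symmetric]) (auto simp: fin)
  also have "{1..card T} = insert (card T) {1..card T - 1}"
    using pos by auto
  also have "(\<Sum>k\<in>insert (card T) {1..card T - 1}. \<Sum>U | U \<in> ?V \<and> card U = k. g U)
      = (\<Sum>k = 1..card T - 1. \<Sum>U | U \<in> ?V \<and> card U = k. g U)
      + (\<Sum>U | U \<in> ?V \<and> card U = card T. g U)"
    using pos by (simp add: add.commute)
  also have "{U. U \<in> ?V \<and> card U = card T} = {T}"
    using j fin by (auto dest: card_subset_eq)
  finally show ?thesis by (simp add: conj_assoc)
qed

theorem lemma4p4:
  fixes A :: qmat and m n :: nat and t :: real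
  assumes "i \<in> {1..n}" and "j \<in> {1..m}"
  shows "rdet m j (replace_row (qadd (qsmult t qid) (qmult n A (ctrans A))) j
                      (row (ctrans A) i))
       = (\<Sum>k = 1..m - 1.
            (\<Sum>\<alpha> \<in> Iseq k m j.
               rdet k (sub_pos \<alpha> j)
                 (principal_sub (replace_row (qmult n A (ctrans A)) j (row (ctrans A) i)) \<alpha>))
            * qreal (t ^ (m - k)))
         + rdet m j (replace_row (qmult n A (ctrans A)) j (row (ctrans A) i))"
proof -
  define M where "M = replace_row (qmult n A (ctrans A)) j (row (ctrans A) i)"
  have central: "\<And>x. qreal t * x = x * qreal t" by (rule qreal_mult_commute)
  have shifted: "replace_row (qadd (qsmult t qid) (qmult n A (ctrans A))) j (row (ctrans A) i)
      = add_diag_except j (qreal t) M"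
    by (intro ext) (auto simp: M_def replace_row_def qadd_def qsmult_def qid_def add_diag_except_def)
  have layer: "(\<Sum>U | j \<in> U \<and> U \<subseteq> {1..m} \<and> card U = k. qreal t ^ (m - card U) * rdet_on U j M)
      = (\<Sum>\<alpha>\<in>Iseq k m j. rdet k (sub_pos \<alpha> j) (principal_sub M \<alpha>)) * qreal (t ^ (m - k))" for k
  proof -
    have "(\<Sum>\<alpha>\<in>Iseq k m j. rdet k (sub_pos \<alpha> j) (principal_sub M \<alpha>))
        = (\<Sum>U | j \<in> U \<and> U \<subseteq> {1..m} \<and> card U = k. rdet_on U j M)"
      unfolding sum_Iseq_eq_sum_subsets[symmetric]
      by (rule sum.cong) (auto simp: Iseq_def Lseq_def rdet_principal_sub[symmetric])
    then show ?thesis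
      by (simp add: sum_distrib_right qreal_power power_commute_central[OF central])
  qed
  have "rdet m j (add_diag_except j (qreal t) M)
      = (\<Sum>U | j \<in> U \<and> U \<subseteq> {1..m}. qreal t ^ (m - card U) * rdet_on U j M)"
    using rdet_on_add_diag_except[OF finite_atLeastAtMost assms(2) central]
    by (simp add: rdet_eq_rdet_on)
  also have "\<dots> = (\<Sum>k = 1..m - 1. \<Sum>U | j \<in> U \<and> U \<subseteq> {1..m} \<and> card U = k.
      qreal t ^ (m - card U) * rdet_on U j M) + rdet m j M"
    unfolding sum_subsets_containing[OF finite_atLeastAtMost assms(2)]
    by (simp add: rdet_eq_rdet_on)
  finally show ?thesis
    unfolding shifted M_def[symmetric] layer .
qed

end
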